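(* Let $\Omega$ be a vector space over $\mathbb{K}$, $E$ a non-trivial locally convex Hausdorff space over $\mathbb{K}$ and $\mathcal{FV}(\Omega)$ a dom-space such that $\mathcal{FV}(\Omega)\subset\mathcal{L}(\Omega)$ as a linear subspace. Then $S(u)\in\mathcal{L}(\Omega,E)$ for all $u\in\mathcal{FV}(\Omega)\varepsilon E$.
   Context: $\mathbb{K}\in\{\mathbb{R},\mathbb{C}\}$; $\mathcal{L}(\Omega,E)$ is the space of linear maps $\Omega\to E$, $\mathcal{L}(\Omega):=\mathcal{L}(\Omega,\mathbb{K})$. Framework: $J,M$ non-empty index sets, $(\omega_m)_{m\in M}$ non-empty sets, $\nu_{j,m}\colon\omega_m\to[0,\infty)$ such that for all $m$, $x\in\omega_m$ some $\nu_{j,m}(x)>0$; $\operatorname{AP}(\Omega)\subset\mathbb{K}^\Omega$ a linear subspace; $T_m\colon\operatorname{dom}T_m\to\mathbb{K}^{\omega_m}$ linear maps on linear subspaces of $\mathbb{K}^\Omega$; $\mathcal{FV}(\Omega):=\{f\in\operatorname{AP}(\Omega)\cap\bigcap_m\operatorname{dom}T_m: |f|_{j,m}:=\sup_{x\in\omega_m}|T_m(f)(x)|\nu_{j,m}(x)<\infty\ \forall j,m\}$ with these seminorms. It is a dom-space if it is Hausdorff, the seminorms are directed and every $\delta_x\colon f\mapsto f(x)$, $x\in\Omega$, belongs to $\mathcal{FV}(\Omega)'$. $\mathcal{FV}(\Omega)\varepsilon E$: continuous linear maps from $\mathcal{FV}(\Omega)'$ (topology of uniform convergence on absolutely convex compact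 sets) to $E$, with the topology of uniform convergence on equicontinuous sets; $S(u)(x):=u(\delta_x)$. *)

theory Defs
  imports "HOL-Analysis.Analysis"
begin

definition is_R_or_C :: "'k::real_normed_field itself \<Rightarrow> bool" where
  "is_R_or_C _ \<longleftrightarrow>
     (\<exists>\<phi>::'k \<Rightarrow> real. bij \<phi> \<and> (\<forall>a b. \<phi> (a + b) = \<phi> a + \<phi> b \<and> \<phi> (a * b) = \<phi> a * \<phi> b)
        \<and> (\<forall>a. \<bar>\<phi> a\<bar> = norm a)) \<or>
     (\<exists>\<phi>::'k \<Rightarrow> complex. bij \<phi> \<and> (\<forall>a b. \<phi> (a + b) = \<phi> a + \<phi> b \<and> \<phi> (a * b) = \<phi> a * \<phi> b)
        \<and> (\<forall>a. cmod (\<phi> a) = norm a))"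

definition seminorm_topology :: "'a::minus set \<Rightarrow> 'i set \<Rightarrow> ('i \<Rightarrow> 'a \<Rightarrow> real) \<Rightarrow> 'a topology" where
  "seminorm_topology X I p = topology (\<lambda>U. U \<subseteq> X \<and>
     (\<forall>x\<in>U. \<exists>F \<epsilon>. finite F \<and> F \<subseteq> I \<and> \<epsilon> > 0 \<and> {y\<in>X. \<forall>i\<in>F. p i (y - x) < \<epsilon>} \<subseteq> U))"

definition is_seminorm :: "('k::real_normed_field \<Rightarrow> 'e::ab_group_add \<Rightarrow> 'e) \<Rightarrow> ('e \<Rightarrow> real) \<Rightarrow> bool" where
  "is_seminorm s q \<longleftrightarrow> (\<forall>x. q x \<ge> 0) \<and> (\<forall>x y. q (x + y) \<le> q x + q y) \<and> (\<forall>c x. q (s c x) = norm c * q x)"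

definition lcHs :: "('k::real_normed_field \<Rightarrow> 'e::ab_group_add \<Rightarrow> 'e) \<Rightarrow> 'q set \<Rightarrow> ('q \<Rightarrow> 'e \<Rightarrow> real) \<Rightarrow> bool" where
  "lcHs s QI q \<longleftrightarrow> Vector_Spaces.vector_space s \<and> (\<forall>i\<in>QI. is_seminorm s (q i)) \<and>
     (\<forall>e. (\<forall>i\<in>QI. q i e = 0) \<longrightarrow> e = 0)"

definition lin_subspace :: "('o \<Rightarrow> 'k::field) set \<Rightarrow> bool" where
  "lin_subspace A \<longleftrightarrow> (\<lambda>x. 0) \<in> A \<and> (\<forall>f\<in>A. \<forall>g\<in>A. (\<lambda>x. f x + g x) \<in> A) \<and>
     (\<forall>c. \<forall>f\<in>A. (\<lambda>x. c * f x) \<in> A)"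

definition FV_framework ::
  "'j set \<Rightarrow> 'm set \<Rightarrow> ('m \<Rightarrow> 'w set) \<Rightarrow> ('j \<Rightarrow> 'm \<Rightarrow> 'w \<Rightarrow> real) \<Rightarrow> ('o \<Rightarrow> 'k::real_normed_field) set
    \<Rightarrow> ('m \<Rightarrow> ('o \<Rightarrow> 'k) set) \<Rightarrow> ('m \<Rightarrow> ('o \<Rightarrow> 'k) \<Rightarrow> ('w \<Rightarrow> 'k)) \<Rightarrow> bool" where
  "FV_framework J M \<omega> \<nu> AP domT T \<longleftrightarrow>
     J \<noteq> {} \<and> M \<noteq> {} \<and> (\<forall>m\<in>M. \<omega> m \<noteq> {}) \<and>
     (\<forall>j\<in>J. \<forall>m\<in>M. \<forall>x\<in>\<omega> m. \<nu> j m x \<ge> 0) \<and>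
     (\<forall>m\<in>M. \<forall>x\<in>\<omega> m. \<exists>j\<in>J. \<nu> j m x > 0) \<and>
     lin_subspace AP \<and>
     (\<forall>m\<in>M. lin_subspace (domT m) \<and>
        (\<forall>f\<in>domT m. \<forall>g\<in>domT m. \<forall>x\<in>\<omega> m. T m (\<lambda>z. f z + g z) x = T m f x + T m g x) \<and>
        (\<forall>c. \<forall>f\<in>domT m. \<forall>x\<in>\<omega> m. T m (\<lambda>z. c * f z) x = c * T m f x))"

definition FV_space ::
  "'j set \<Rightarrow> 'm set \<Rightarrow> ('m \<Rightarrow> 'w set) \<Rightarrow> ('j \<Rightarrow> 'm \<Rightarrow> 'w \<Rightarrow> real) \<Rightarrow> ('o \<Rightarrow> 'k::real_normed_field) set
    \<Rightarrow> ('m \<Rightarrow> ('o \<Rightarrow> 'k) set) \<Rightarrow> ('m \<Rightarrow> ('o \<Rightarrow> 'k) \<Rightarrow> ('w \<Rightarrow> 'k)) \<Rightarrow> ('o \<Rightarrow> 'k) set" where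
  "FV_space J M \<omega> \<nu> AP domT T = {f. f \<in> AP \<and> (\<forall>m\<in>M. f \<in> domT m) \<and>
     (\<forall>j\<in>J. \<forall>m\<in>M. bdd_above ((\<lambda>x. norm (T m f x) * \<nu> j m x) ` \<omega> m))}"

definition fv_seminorm ::
  "('m \<Rightarrow> 'w set) \<Rightarrow> ('j \<Rightarrow> 'm \<Rightarrow> 'w \<Rightarrow> real) \<Rightarrow> ('m \<Rightarrow> ('o \<Rightarrow> 'k::real_normed_field) \<Rightarrow> ('w \<Rightarrow> 'k))
    \<Rightarrow> 'j \<Rightarrow> 'm \<Rightarrow> ('o \<Rightarrow> 'k) \<Rightarrow> real" where
  "fv_seminorm \<omega> \<nu> T j m f = (SUP x\<in>\<omega> m. norm (T m f x) * \<nu> j m x)"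

text \<open>Topological dual of a subspace X of K^Omega with topology given by seminorms p i, i in I.
  Functionals are represented extensionally (value 0 outside X).\<close>
definition cont_dual :: "('o \<Rightarrow> 'k::real_normed_field) set \<Rightarrow> 'i set \<Rightarrow> ('i \<Rightarrow> ('o \<Rightarrow> 'k) \<Rightarrow> real)
    \<Rightarrow> (('o \<Rightarrow> 'k) \<Rightarrow> 'k) set" where
  "cont_dual X I p = {y. (\<forall>f. f \<notin> X \<longrightarrow> y f = 0) \<and>
     (\<forall>f\<in>X. \<forall>g\<in>X. y (\<lambda>x. f x + g x) = y f + y g) \<and>
     (\<forall>c. \<forall>f\<in>X. y (\<lambda>x. c * f x) = c * y f) \<and>
     (\<exists>F C. finite F \<and> F \<subseteq> I \<and> (\<forall>f\<in>X. norm (y f) \<le> C * (\<Sum>i\<in>F. p i f)))}"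

definition point_eval :: "('o \<Rightarrow> 'k::zero) set \<Rightarrow> 'o \<Rightarrow> (('o \<Rightarrow> 'k) \<Rightarrow> 'k)" where
  "point_eval X x = (\<lambda>f. if f \<in> X then f x else 0)"

definition dom_space ::
  "'j set \<Rightarrow> 'm set \<Rightarrow> ('m \<Rightarrow> 'w set) \<Rightarrow> ('j \<Rightarrow> 'm \<Rightarrow> 'w \<Rightarrow> real) \<Rightarrow> ('o \<Rightarrow> 'k::real_normed_field) set
    \<Rightarrow> ('m \<Rightarrow> ('o \<Rightarrow> 'k) set) \<Rightarrow> ('m \<Rightarrow> ('o \<Rightarrow> 'k) \<Rightarrow> ('w \<Rightarrow> 'k)) \<Rightarrow> bool" where
  "dom_space J M \<omega> \<nu> AP domT T \<longleftrightarrow>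
     (let FV = FV_space J M \<omega> \<nu> AP domT T; sn = fv_seminorm \<omega> \<nu> T in
       (\<forall>f\<in>FV. (\<forall>j\<in>J. \<forall>m\<in>M. sn j m f = 0) \<longrightarrow> f = (\<lambda>x. 0)) \<and>
       (\<forall>j1\<in>J. \<forall>m1\<in>M. \<forall>j2\<in>J. \<forall>m2\<in>M. \<exists>j3\<in>J. \<exists>m3\<in>M. \<exists>C>0. \<forall>f\<in>FV.
          max (sn j1 m1 f) (sn j2 m2 f) \<le> C * sn j3 m3 f) \<and>
       (\<forall>x. point_eval FV x \<in> cont_dual FV (J \<times> M) (\<lambda>(j, m). sn j m)))"

definition abs_convex :: "('o \<Rightarrow> 'k::real_normed_field) set \<Rightarrow> bool" where
  "abs_convex K \<longleftrightarrow> (\<forall>f\<in>K. \<forall>g\<in>K. \<forall>a b. norm a + norm b \<le> 1 \<longrightarrow> (\<lambda>x. a * f x + b * g x) \<in> K)"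

definition FV_topology where
  "FV_topology J M \<omega> \<nu> AP domT T =
     seminorm_topology (FV_space J M \<omega> \<nu> AP domT T) (J \<times> M) (\<lambda>(j, m). fv_seminorm \<omega> \<nu> T j m)"

definition FV_dual where
  "FV_dual J M \<omega> \<nu> AP domT T =
     cont_dual (FV_space J M \<omega> \<nu> AP domT T) (J \<times> M) (\<lambda>(j, m). fv_seminorm \<omega> \<nu> T j m)"

text \<open>FV(Omega)'_kappa: the dual with the topology of uniform convergence on (non-empty)
  absolutely convex compact subsets of FV(Omega).\<close>
definition FV_dual_kappa where
  "FV_dual_kappa J M \<omega> \<nu> AP domT T =
     seminorm_topology (FV_dual J M \<omega> \<nu> AP domT T)
       {K. K \<subseteq> FV_space J M \<omega> \<nu> AP domT T \<and> K \<noteq> {} \<and> abs_convex K \<and>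
           compactin (FV_topology J M \<omega> \<nu> AP domT T) K}
       (\<lambda>K y. SUP f\<in>K. norm (y f))"

text \<open>The underlying set of FV(Omega) epsilon E: continuous linear maps FV(Omega)'_kappa \<rightarrow> E
  (represented extensionally, value 0 outside the dual).\<close>
definition FV_eps ::
  "'j set \<Rightarrow> 'm set \<Rightarrow> ('m \<Rightarrow> 'w set) \<Rightarrow> ('j \<Rightarrow> 'm \<Rightarrow> 'w \<Rightarrow> real) \<Rightarrow> ('o \<Rightarrow> 'k::real_normed_field) set
    \<Rightarrow> ('m \<Rightarrow> ('o \<Rightarrow> 'k) set) \<Rightarrow> ('m \<Rightarrow> ('o \<Rightarrow> 'k) \<Rightarrow> ('w \<Rightarrow> 'k))
    \<Rightarrow> ('k \<Rightarrow> 'e::ab_group_add \<Rightarrow> 'e) \<Rightarrow> 'q set \<Rightarrow> ('q \<Rightarrow> 'e \<Rightarrow> real)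
    \<Rightarrow> ((('o \<Rightarrow> 'k) \<Rightarrow> 'k) \<Rightarrow> 'e) set" where
  "FV_eps J M \<omega> \<nu> AP domT T sE QI q =
     (let D = FV_dual J M \<omega> \<nu> AP domT T in
      {u. (\<forall>y. y \<notin> D \<longrightarrow> u y = 0) \<and>
          (\<forall>y1\<in>D. \<forall>y2\<in>D. u (\<lambda>f. y1 f + y2 f) = u y1 + u y2) \<and>
          (\<forall>c. \<forall>y\<in>D. u (\<lambda>f. c * y f) = sE c (u y)) \<and>
          continuous_map (FV_dual_kappa J M \<omega> \<nu> AP domT T) (seminorm_topology UNIV QI q) u})"

definition S_map where
  "S_map J M \<omega> \<nu> AP domT T u = (\<lambda>x. u (point_eval (FV_space J M \<omega> \<nu> AP domT T) x))"

end

theory Submission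
  imports Defs
begin

text \<open>Since every f in FV(Omega) is linear, x \<mapsto> delta_x is a linear map from Omega into
  FV(Omega)', and S(u) is its composition with the linear map u.\<close>

lemma linear_iff_additive_homogeneous:
  "Vector_Spaces.linear s1 s2 f \<longleftrightarrow>
     Vector_Spaces.vector_space s1 \<and> Vector_Spaces.vector_space s2 \<and>
     (\<forall>x y. f (x + y) = f x + f y) \<and> (\<forall>c x. f (s1 c x) = s2 c (f x))"
  by (auto simp: Vector_Spaces.linear_def module_hom_def module_hom_axioms_def
      vector_space_def module_def)

lemma point_eval_add:
  assumes "\<forall>f\<in>X. Vector_Spaces.linear s (*) f"
  shows "point_eval X (x + y) = (\<lambda>f. point_eval X x f + point_eval X y f)"
  using assms by (auto simp: point_eval_def linear_iff_additive_homogeneous)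

lemma point_eval_scale:
  assumes "\<forall>f\<in>X. Vector_Spaces.linear s (*) f"
  shows "point_eval X (s c x) = (\<lambda>f. c * point_eval X x f)"
  using assms by (auto simp: point_eval_def linear_iff_additive_homogeneous)

lemma point_eval_in_FV_dual:
  assumes "dom_space J M \<omega> \<nu> AP domT T"
  shows "point_eval (FV_space J M \<omega> \<nu> AP domT T) x \<in> FV_dual J M \<omega> \<nu> AP domT T"
  using assms by (simp add: dom_space_def FV_dual_def Let_def)

lemma FV_eps_add:
  assumes "u \<in> FV_eps J M \<omega> \<nu> AP domT T sE QI q"
    and "y1 \<in> FV_dual J M \<omega> \<nu> AP domT T" and "y2 \<in> FV_dual J M \<omega> \<nu> AP domT T"
  shows "u (\<lambda>f. y1 f + y2 f) = u y1 + u y2"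
  using assms by (simp add: FV_eps_def Let_def)

lemma FV_eps_scale:
  assumes "u \<in> FV_eps J M \<omega> \<nu> AP domT T sE QI q"
    and "y \<in> FV_dual J M \<omega> \<nu> AP domT T"
  shows "u (\<lambda>f. c * y f) = sE c (u y)"
  using assms by (simp add: FV_eps_def Let_def)

theorem proposition4p14:
  fixes sO :: "'k::real_normed_field \<Rightarrow> 'o::ab_group_add \<Rightarrow> 'o"
    and sE :: "'k \<Rightarrow> 'e::ab_group_add \<Rightarrow> 'e"
    and QI :: "'q set" and q :: "'q \<Rightarrow> 'e \<Rightarrow> real"
    and J :: "'j set" and M :: "'m set" and \<omega> :: "'m \<Rightarrow> 'w set"
    and \<nu> :: "'j \<Rightarrow> 'm \<Rightarrow> 'w \<Rightarrow> real"
    and AP :: "('o \<Rightarrow> 'k) set" and domT :: "'m \<Rightarrow> ('o \<Rightarrow> 'k) set"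
    and T :: "'m \<Rightarrow> ('o \<Rightarrow> 'k) \<Rightarrow> ('w \<Rightarrow> 'k)"
    and u :: "(('o \<Rightarrow> 'k) \<Rightarrow> 'k) \<Rightarrow> 'e"
  assumes "is_R_or_C TYPE('k)"
    and "Vector_Spaces.vector_space sO"
    and "lcHs sE QI q" and "\<exists>e::'e. e \<noteq> 0"
    and "FV_framework J M \<omega> \<nu> AP domT T"
    and "dom_space J M \<omega> \<nu> AP domT T"
    and "\<forall>f\<in>FV_space J M \<omega> \<nu> AP domT T. Vector_Spaces.linear sO (*) f"
    and "u \<in> FV_eps J M \<omega> \<nu> AP domT T sE QI q"
  shows "Vector_Spaces.linear sO sE (S_map J M \<omega> \<nu> AP domT T u)"
proof -
  have vector_space_E: "Vector_Spaces.vector_space sE"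
    using assms(3) by (simp add: lcHs_def)
  note delta_in_dual = point_eval_in_FV_dual[OF assms(6)]
  have "S_map J M \<omega> \<nu> AP domT T u (x + y) =
      S_map J M \<omega> \<nu> AP domT T u x + S_map J M \<omega> \<nu> AP domT T u y" for x y
    unfolding S_map_def point_eval_add[OF assms(7)]
    using FV_eps_add[OF assms(8) delta_in_dual delta_in_dual] .
  moreover have "S_map J M \<omega> \<nu> AP domT T u (sO c x) = sE c (S_map J M \<omega> \<nu> AP domT T u x)"
    for c x
    unfolding S_map_def point_eval_scale[OF assms(7)]
    using FV_eps_scale[OF assms(8) delta_in_dual] .
  ultimately show ?thesis
    using assms(2) vector_space_E by (simp add: linear_iff_additive_homogeneous)
qed

end
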